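(* It holds that $\Gamma(\mathcal{C}^I)\subseteq\mathcal{F}$.
   Context: Fix $I\in\mathbb{N}$. $\mathcal{C}=\{f\in C(\mathbb{R}_+,\mathbb{R}_+):f(0)=0,f\text{ non-decreasing}\}$, $\mathcal{C}^\uparrow=\{f\in\mathcal{C}:f\text{ strictly increasing},\lim_{u\to\infty}f(u)=\infty\}$. For $\psi\in\mathcal{C}^I$, $\phi_i(u):=u-\sum_{j=1}^I2(i\wedge j)\psi_j(u)$, and $\mathcal{F}:=\{\psi\in\mathcal{C}^I:\phi_I\in\mathcal{C}^\uparrow\}$. For $\bar\psi\in\mathcal{C}^I$, $\gamma_I(z):=z$ and $\gamma_i(z):=z+\sum_{j>i}2(j-i)\bar\psi_j(\gamma_j(z))$ for $i=I-1,\dots,0$ (each $\gamma_i\in\mathcal{C}^\uparrow$, so $\gamma_0^{-1}$ exists); $\Gamma(\bar\psi):=(\bar\psi_i\circ\gamma_i\circ\gamma_0^{-1})_{i=1}^I$. *)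

theory Defs
  imports "HOL-Analysis.Analysis"
begin

text \<open>Functions R_+ -> R_+ are represented as real => real; only values on {0..} matter.\<close>

definition classC :: "(real \<Rightarrow> real) set" where
  "classC = {f. continuous_on {0..} f \<and> f ` {0..} \<subseteq> {0..} \<and> f 0 = 0 \<and> mono_on {0..} f}"

definition classC_up :: "(real \<Rightarrow> real) set" where
  "classC_up = {f. f \<in> classC \<and> strict_mono_on {0..} f \<and> filterlim f at_top at_top}"

definition classC_pow :: "nat \<Rightarrow> (nat \<Rightarrow> real \<Rightarrow> real) set" where
  "classC_pow I = {\<psi>. \<forall>i\<in>{1..I}. \<psi> i \<in> classC}"

definition phi :: "nat \<Rightarrow> (nat \<Rightarrow> real \<Rightarrow> real) \<Rightarrow> nat \<Rightarrow> real \<Rightarrow> real" where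
  "phi I \<psi> i u = u - (\<Sum>j=1..I. 2 * real (min i j) * \<psi> j u)"

definition classF :: "nat \<Rightarrow> (nat \<Rightarrow> real \<Rightarrow> real) set" where
  "classF I = {\<psi>. \<psi> \<in> classC_pow I \<and> phi I \<psi> I \<in> classC_up}"

function gamma :: "nat \<Rightarrow> (nat \<Rightarrow> real \<Rightarrow> real) \<Rightarrow> nat \<Rightarrow> real \<Rightarrow> real" where
  "gamma I \<psi> i z = z + (\<Sum>j\<in>{i<..I}. 2 * real (j - i) * \<psi> j (gamma I \<psi> j z))"
  by pat_completeness auto
termination
  by (relation "Wellfounded.measure (\<lambda>(I, \<psi>, i, z). I - i)") auto

definition Gamma :: "nat \<Rightarrow> (nat \<Rightarrow> real \<Rightarrow> real) \<Rightarrow> nat \<Rightarrow> real \<Rightarrow> real" where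
  "Gamma I \<psi> i = \<psi> i \<circ> gamma I \<psi> i \<circ> the_inv_into {0..} (gamma I \<psi> 0)"

end

theory Submission
  imports Defs
begin

text \<open>
  Each gamma i is the identity plus a nonnegative combination of the maps psi j o gamma j with
  j > i, so by downward induction on i it lies in classC_up. The class classC_up consists exactly
  of the strictly increasing bijections of [0,\<infinity>) (continuity of such a map is automatic), so it
  is closed under inversion and the inverse h of gamma 0 lies in classC_up. The components
  psi i o gamma i o h of Gamma psi are composites of maps in classC. Finally, evaluating
  gamma 0 z = z + \<Sum>j. 2j psi j (gamma j z) at z = h u gives u = h u + \<Sum>j. 2j (Gamma psi) j u,
  that is, phi I (Gamma psi) I = h on [0,\<infinity>).
\<close>

declare gamma.simps [simp del]

lemma classC_compose:
  assumes f: "f \<in> classC" and g: "g \<in> classC"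
  shows "(\<lambda>z. f (g z)) \<in> classC"
proof -
  have g_into: "g ` {0..} \<subseteq> {0..}" using g by (simp add: classC_def)
  have "continuous_on {0..} (\<lambda>z. f (g z))"
    using continuous_on_compose2[of "{0..}" f "{0..}" g] f g g_into by (auto simp: classC_def)
  moreover have "mono_on {0..} (\<lambda>z. f (g z))"
    using f g g_into by (auto simp: classC_def mono_on_def image_subset_iff)
  ultimately show ?thesis using f g g_into by (auto simp: classC_def)
qed

lemma classC_sum:
  assumes "finite K" "\<And>k. k \<in> K \<Longrightarrow> f k \<in> classC" "\<And>k. k \<in> K \<Longrightarrow> 0 \<le> c k"
  shows "(\<lambda>z. \<Sum>k\<in>K. c k * f k z) \<in> classC"
proof -
  have "continuous_on {0..} (\<lambda>z. \<Sum>k\<in>K. c k * f k z)"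
    using assms by (intro continuous_on_sum continuous_on_mult_left) (auto simp: classC_def)
  moreover have "(\<lambda>z. \<Sum>k\<in>K. c k * f k z) ` {0..} \<subseteq> {0..}"
    using assms by (force simp: classC_def intro!: sum_nonneg)
  moreover have "mono_on {0..} (\<lambda>z. \<Sum>k\<in>K. c k * f k z)"
    using assms by (intro mono_onI sum_mono mult_left_mono) (auto simp: classC_def mono_on_def)
  ultimately show ?thesis using assms by (simp add: classC_def)
qed

lemma continuous_on_mono_onto_nonneg:
  fixes h :: "real \<Rightarrow> real"
  assumes mono: "mono_on {0..} h" and onto: "h ` {0..} = {0..}"
  shows "continuous_on {0..} h"
proof -
  \<comment> \<open>Extended by the identity on the negative reals, h becomes a monotone map of \<real> onto \<real>.\<close>
  define g where "g x = (if 0 \<le> x then h x else x)" for x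
  have "range g = UNIV"
  proof (intro set_eqI iffI)
    fix y :: real
    show "y \<in> range g"
    proof (cases "0 \<le> y")
      case True
      with onto obtain x where "0 \<le> x" "y = h x" by (metis atLeast_iff imageE)
      then show ?thesis by (simp add: g_def)
    next
      case False
      then show ?thesis by (metis g_def rangeI)
    qed
  qed simp
  moreover have "g x \<le> g y" if "x \<le> y" for x y
  proof -
    have "0 \<le> h z" if "0 \<le> z" for z
      using onto that by auto
    with \<open>x \<le> y\<close> mono show ?thesis
      by (force simp: g_def mono_on_def)
  qed
  ultimately have "continuous_on UNIV g"
    by (intro continuous_onI_mono) auto
  then have "continuous_on {0..} g"
    by (rule continuous_on_subset) simp
  then show ?thesis
    by (rule continuous_on_cong[THEN iffD1, rotated 2]) (simp_all add: g_def)
qed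

lemma classC_up_iff:
  "f \<in> classC_up \<longleftrightarrow> strict_mono_on {0..} f \<and> f ` {0..} = {0..}"
proof
  assume f: "f \<in> classC_up"
  then have cont: "continuous_on {0..} f" and f0: "f 0 = 0" and into: "f ` {0..} \<subseteq> {0..}"
    and lim: "filterlim f at_top at_top"
    by (auto simp: classC_up_def classC_def)
  have "u \<in> f ` {0..}" if "0 \<le> u" for u
  proof -
    obtain N where N: "\<And>x. N \<le> x \<Longrightarrow> u \<le> f x"
      using lim by (auto simp: filterlim_at_top eventually_at_top_linorder)
    have "continuous_on {0..max N 0} f"
      using cont by (rule continuous_on_subset) auto
    then obtain x where "0 \<le> x" "f x = u"
      using IVT'[of f 0 u "max N 0"] N[of "max N 0"] f0 \<open>0 \<le> u\<close> by auto
    then show ?thesis by auto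
  qed
  with f into show "strict_mono_on {0..} f \<and> f ` {0..} = {0..}"
    by (auto simp: classC_up_def)
next
  assume "strict_mono_on {0..} f \<and> f ` {0..} = {0..}"
  then have strict: "strict_mono_on {0..} f" and onto: "f ` {0..} = {0..}" by auto
  have mono: "mono_on {0..} f" using strict by (rule strict_mono_on_imp_mono_on)
  have preimage: "\<exists>x\<ge>0. f x = u" if "0 \<le> u" for u
    using onto that by (metis atLeast_iff imageE)
  have "f 0 = 0"
  proof -
    obtain x where "0 \<le> x" "f x = 0" using preimage by blast
    then have "f 0 \<le> 0" using mono by (metis atLeast_iff mono_onD order_refl)
    moreover have "0 \<le> f 0" using onto by auto
    ultimately show ?thesis by simp
  qed
  moreover have "filterlim f at_top at_top"
    unfolding filterlim_at_top eventually_at_top_linorder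
  proof
    fix Z :: real
    obtain x where "0 \<le> x" "f x = max Z 0" using preimage[of "max Z 0"] by auto
    have "Z \<le> f y" if "x \<le> y" for y
      using mono_onD[OF mono, of x y] \<open>0 \<le> x\<close> \<open>f x = max Z 0\<close> that by auto
    then show "\<exists>N. \<forall>y\<ge>N. Z \<le> f y" by blast
  qed
  ultimately show "f \<in> classC_up"
    using strict mono onto continuous_on_mono_onto_nonneg[OF mono onto]
    by (simp add: classC_up_def classC_def)
qed

lemma classC_up_cong:
  assumes "\<And>u. 0 \<le> u \<Longrightarrow> f u = g u"
  shows "f \<in> classC_up \<longleftrightarrow> g \<in> classC_up"
proof -
  have "f ` {0..} = g ` {0..}" using assms by (intro image_cong) auto
  moreover have "strict_mono_on {0..} f = strict_mono_on {0..} g"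
    using assms by (simp add: strict_mono_on_def)
  ultimately show ?thesis by (simp add: classC_up_iff)
qed

lemma the_inv_into_classC_up:
  assumes "f \<in> classC_up"
  shows "the_inv_into {0..} f \<in> classC_up"
proof -
  have strict: "strict_mono_on {0..} f" and onto: "f ` {0..} = {0..}"
    using assms by (auto simp: classC_up_iff)
  have inj: "inj_on f {0..}" using strict by (rule strict_mono_on_imp_inj_on)
  have "strict_mono_on {0..} (the_inv_into {0..} f)"
  proof (rule strict_mono_onI)
    fix r s :: real assume "r \<in> {0..}" "s \<in> {0..}" "r < s"
    then obtain x y where "x \<in> {0..}" "y \<in> {0..}" "r = f x" "s = f y"
      using onto by (metis imageE)
    with \<open>r < s\<close> show "the_inv_into {0..} f r < the_inv_into {0..} f s"
      using inj strict by (simp add: the_inv_into_f_f strict_mono_on_less)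
  qed
  moreover have "the_inv_into {0..} f ` {0..} = {0..}"
    using the_inv_into_onto[OF inj] onto by simp
  ultimately show ?thesis by (simp add: classC_up_iff)
qed

lemma classC_up_id_plus:
  assumes "S \<in> classC"
  shows "(\<lambda>z. z + S z) \<in> classC_up"
proof -
  have S: "continuous_on {0..} S" "S ` {0..} \<subseteq> {0..}" "S 0 = 0" "mono_on {0..} S"
    using assms by (auto simp: classC_def)
  have strict: "strict_mono_on {0..} (\<lambda>z. z + S z)"
    using S(4) by (intro strict_mono_onI) (auto simp: mono_on_def intro: add_less_le_mono)
  have "filterlim (\<lambda>z. z + S z) at_top at_top"
    using S(2) by (intro filterlim_at_top_mono[OF filterlim_ident])
      (auto simp: eventually_at_top_linorder image_subset_iff intro!: exI[of _ 0])
  moreover have "(\<lambda>z. z + S z) ` {0..} \<subseteq> {0..}" using S(2) by force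
  ultimately show ?thesis
    using S strict strict_mono_on_imp_mono_on[OF strict]
    by (auto simp: classC_up_def classC_def intro: continuous_on_add continuous_on_id)
qed

lemma gamma_classC_up:
  assumes \<psi>: "\<psi> \<in> classC_pow I"
  shows "gamma I \<psi> i \<in> classC_up"
proof (induction "I - i" arbitrary: i rule: less_induct)
  case less
  have "(\<lambda>z. \<Sum>j\<in>{i<..I}. 2 * real (j - i) * \<psi> j (gamma I \<psi> j z)) \<in> classC"
  proof (rule classC_sum)
    fix j assume j: "j \<in> {i<..I}"
    then have "\<psi> j \<in> classC" using \<psi> by (auto simp: classC_pow_def)
    moreover have "I - j < I - i" using j by auto
    then have "gamma I \<psi> j \<in> classC_up" by (rule less)
    then have "gamma I \<psi> j \<in> classC" unfolding classC_up_def by blast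
    ultimately show "(\<lambda>z. \<psi> j (gamma I \<psi> j z)) \<in> classC" by (rule classC_compose)
  qed auto
  then have "(\<lambda>z. z + (\<Sum>j\<in>{i<..I}. 2 * real (j - i) * \<psi> j (gamma I \<psi> j z))) \<in> classC_up"
    by (rule classC_up_id_plus)
  moreover have "gamma I \<psi> i = (\<lambda>z. z + (\<Sum>j\<in>{i<..I}. 2 * real (j - i) * \<psi> j (gamma I \<psi> j z)))"
    by (rule ext) (rule gamma.simps)
  ultimately show ?case by simp
qed

lemma Gamma_classC_pow:
  assumes \<psi>: "\<psi> \<in> classC_pow I"
  shows "Gamma I \<psi> \<in> classC_pow I"
proof -
  have h: "the_inv_into {0..} (gamma I \<psi> 0) \<in> classC"
    using the_inv_into_classC_up[OF gamma_classC_up[OF \<psi>]] by (simp add: classC_up_def)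
  have "Gamma I \<psi> i \<in> classC" if "i \<in> {1..I}" for i
  proof -
    have "\<psi> i \<in> classC" using \<psi> that by (simp add: classC_pow_def)
    moreover have "gamma I \<psi> i \<in> classC" using gamma_classC_up[OF \<psi>] by (simp add: classC_up_def)
    ultimately show ?thesis
      unfolding Gamma_def comp_def by (rule classC_compose[OF _ classC_compose[OF _ h]])
  qed
  then show ?thesis by (simp add: classC_pow_def)
qed

lemma phi_Gamma:
  assumes \<psi>: "\<psi> \<in> classC_pow I" and "0 \<le> u"
  shows "phi I (Gamma I \<psi>) I u = the_inv_into {0..} (gamma I \<psi> 0) u"
proof -
  define z where "z = the_inv_into {0..} (gamma I \<psi> 0) u"
  have "strict_mono_on {0..} (gamma I \<psi> 0)" "gamma I \<psi> 0 ` {0..} = {0..}"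
    using gamma_classC_up[OF \<psi>] by (auto simp: classC_up_iff)
  then have "u = gamma I \<psi> 0 z"
    using \<open>0 \<le> u\<close> by (simp add: z_def f_the_inv_into_f strict_mono_on_imp_inj_on)
  also have "\<dots> = z + (\<Sum>j\<in>{0<..I}. 2 * real j * \<psi> j (gamma I \<psi> j z))"
    by (subst gamma.simps) simp
  also have "{0<..I} = {1..I}" by auto
  also have "(\<Sum>j\<in>{1..I}. 2 * real j * \<psi> j (gamma I \<psi> j z))
      = (\<Sum>j=1..I. 2 * real (min I j) * Gamma I \<psi> j u)"
    by (intro sum.cong) (auto simp: Gamma_def z_def)
  finally show ?thesis
    unfolding phi_def z_def[symmetric] by linarith
qed

theorem proposition3p6:
  fixes I :: nat
  shows "Gamma I ` classC_pow I \<subseteq> classF I"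
proof
  fix \<psi>' assume "\<psi>' \<in> Gamma I ` classC_pow I"
  then obtain \<psi> where \<psi>: "\<psi> \<in> classC_pow I" and \<psi>': "\<psi>' = Gamma I \<psi>" by auto
  have "the_inv_into {0..} (gamma I \<psi> 0) \<in> classC_up"
    using gamma_classC_up[OF \<psi>] by (rule the_inv_into_classC_up)
  moreover have "phi I (Gamma I \<psi>) I \<in> classC_up \<longleftrightarrow> the_inv_into {0..} (gamma I \<psi> 0) \<in> classC_up"
    by (rule classC_up_cong) (rule phi_Gamma[OF \<psi>])
  ultimately have "phi I (Gamma I \<psi>) I \<in> classC_up" by blast
  with Gamma_classC_pow[OF \<psi>] show "\<psi>' \<in> classF I"
    by (simp add: classF_def \<psi>')
qed

end
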